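(* Consider the PDP-TSLU feasible set described in the context. For each pair of pickup tasks with $i\in P^{4},\ j\in P^{1}$, or $i\in P^{3},\ j\in P^{2}$, every feasible solution of the PDP-TSLU satisfies \[ x_{ij}+x_{ji}+x_{i,i+n}+x_{i+n,j+n}\le 1, \] where any variable $x_{uv}$ whose arc $(u,v)$ is not in the arc set $A$ is taken to be $0$.
   Context: Data. Let $n\ge1$, $P=\{1,\dots,n\}$ (pickup tasks), $D=\{n+1,\dots,2n\}$ (delivery tasks; task $i+n$ is the delivery paired with pickup $i$), $V'=P\cup D$, $V=\{0\}\cup V'\cup\{2n+1\}$ ($0$ and $2n+1$ are virtual start and end tasks). Each $i\in V'$ has a side indicator $a_i\in\{0,1\}$. Define $P^{1}=\{i\in P:a_i=a_{i+n}=0\}$, $P^{2}=\{i\in P:a_i=a_{i+n}=1\}$, $P^{3}=\{i\in P:a_i=0,a_{i+n}=1\}$, $P^{4}=\{i\in P:a_i=1,a_{i+n}=0\}$. The pickup tasks are partitioned into FIFO queues (one per station); for pickups $k,j$ in the same queue, $k\lhd j$ (equivalently $j\rhd k$) means $k$ is queued ahead of $j$, and $i\oplus1$ denotes the pickup queued immediately behind $i$ in its queue (if any). Given are an integer capacity $Q\ge1$, loads $q_i>0$ and $q_{i+n}=-q_i$ for $i\in P$, durations $s_i\ge0$ for $i\in V\setminus\{2n+1\}$ with $s_0=0$, windows $[e_i,l_i]$ for $i\in P$, and travel times $t_{ij}\ge0$. Arc set. For $i\in P$ let $S^{i}_{P,1}=\{j\in P:j\lhd i\}$, $S^{i}_{P,2}=\{j\in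 P:j\rhd i\oplus1\}$, $S^{i}_{P,3}=P^{3}$ if $i\in P^{1}\cup P^{4}$ (else $\emptyset$), $S^{i}_{P,4}=P^{4}$ if $i\in P^{2}\cup P^{3}$ (else $\emptyset$), $S^{i}_{D,1}=\{j\in D:j-n\rhd i\}$, $S^{i}_{D,2}=\{j\in D:j-n\in P^{1}\cup P^{4}\setminus\{i\}\}$ if $i\in P^{1}\cup P^{3}$ (else $\emptyset$), $S^{i}_{D,3}=\{j\in D:j-n\in P^{2}\cup P^{3}\setminus\{i\}\}$ if $i\in P^{2}\cup P^{4}$ (else $\emptyset$). For $i\in D$ let $S^{i}_{P,5}=\{j\in P:j\lhd i-n\}$; $S^{i}_{P,6}=\{j\in P:\exists k\in P^{3},\ i-n\lhd k\lhd j\}$ if $i-n\in P^{1}$ (else $\emptyset$); $S^{i}_{P,7}=\{j\in P:\exists k\in P^{4},\ i-n\lhd k\lhd j\}$ if $i-n\in P^{2}$ (else $\emptyset$); $S^{i}_{P,8}=\{j\in P:|\{k\in P^{3}:i-n\lhd k\lhd j\}|\ge Q\}$ if $i-n\in P^{3}$ (else $\emptyset$); $S^{i}_{P,9}=\{j\in P:|\{k\in P^{4}:i-n\lhd k\lhd j\}|\ge Q\}$ if $i-n\in P^{4}$ (else $\emptyset$); $S^{i}_{D,4}=\{j\in D:j-n\rhd i-n\}$ if $i-n\in P^{1}\cup P^{2}$ (else $\emptyset$); $S^{i}_{D,5}=\{j\in D:j-n\lhd i-n\}$ if $i-n\in P^{3}\cup P^{4}$ (else $\emptyset$); $S^{i}_{D,6}=\{j\in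 D:j-n\in S^{i}_{P,8}\cup S^{i}_{P,9}\}$; $S^{i}_{D,7}=\{j\in D:j-n\in P^{2}\cup P^{4}\}$ if $i-n\in P^{3}$ (else $\emptyset$); $S^{i}_{D,8}=\{j\in D:j-n\in P^{1}\cup P^{3}\}$ if $i-n\in P^{4}$ (else $\emptyset$). The arc set is $A=\{(0,j):j\in P,\ \nexists k\lhd j\}\cup\{(i,2n+1):i\in D,\ \nexists k\rhd i-n\}\cup\{(i,j):i\in P,\ j\in V'\setminus(\cup_{l=1}^{4}S^{i}_{P,l}\cup\cup_{l=1}^{3}S^{i}_{D,l})\}\cup\{(i,j):i\in D,\ j\in V'\setminus(\cup_{l=5}^{9}S^{i}_{P,l}\cup\cup_{l=4}^{8}S^{i}_{D,l})\}$, minus all $(i,j)$ with $i,j\in V'$ and $i=j$ or $i=j+n$. Let $A'=\{(i,j)\in A:i,j\in V'\}$. Feasible solutions of the PDP-TSLU. Variables: $x_{ij}\in\{0,1\}$ for $(i,j)\in A$; $y^{k}_{ij}\in\{0,1\}$ for $(i,j)\in A'$, $k\in P$; reals $b_i\ge0$ ($b_0=0$) and $w_i\ge0$ ($w_0=0$). Constraints: (i) $\sum_{j:(i,j)\in A}x_{ij}=1$ for $i\in V\setminus\{2n+1\}$ and $\sum_{j:(j,i)\in A}x_{ji}=1$ for $i\in V\setminus\{0\}$; (ii) $b_{i+n}\ge b_i+s_i+t_{i,i+n}$ for $i\in P$; (iii) $b_{i\oplus1}\ge b_i+s_i$ whenever $i\oplus1$ exists; (iv) for $(i,j)\in A$ with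 $j\in V'\cup\{2n+1\}$, $x_{ij}=1\Rightarrow b_j\ge b_i+s_i+t_{ij}$, and for $(i,j)\in A$ with $j\in V'$, $x_{ij}=1\Rightarrow w_j\ge w_i+q_j$; (v) $e_i\le b_{i+n}+s_{i+n}\le l_i$ for $i\in P$; (vi) $\max\{0,q_i\}\le w_i\le\min\{Q,Q+q_i\}$ for $i\in V'$; (vii) for all $i\in V'$, $k\in P$: $\sum_{j:(i,j)\in A'}y^k_{ij}-\sum_{j:(j,i)\in A'}y^k_{ji}$ equals $1$ if $i=k$, $-1$ if $i=k+n$, $0$ otherwise; (viii) writing $Y^k(v)=\sum_{u:(u,v)\in A'}y^k_{uv}$: $Y^k(j)=Y^k(j+n)$ for $j\in P^{1}\setminus\{k\},k\in P^{1}$ and for $j\in P^{2}\setminus\{k\},k\in P^{2}$; $Y^k(j)+Y^k(j+n)\le1$ for $j\in P^{3}\setminus\{k\},k\in P^{3}$ and for $j\in P^{4}\setminus\{k\},k\in P^{4}$; $y^k_{uj}=0$ for all $(u,j)\in A'$ when ($j\in P^{3},k\in P^{1}$) or ($j\in P^{4},k\in P^{2}$) or ($j\in P^{4},k\in P^{3}$) or ($j\in P^{3},k\in P^{4}$); $y^k_{u,j+n}=0$ for all $(u,j+n)\in A'$ when ($j\in P^{4},k\in P^{1}$) or ($j\in P^{3},k\in P^{2}$); (ix) $y^k_{ij}\le x_{ij}$ for $(i,j)\in A'$, $k\in P$. *)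

theory Defs
  imports Complex_Main
begin

definition Pset :: "nat \<Rightarrow> nat set" where "Pset n = {1..n}"
definition Dset :: "nat \<Rightarrow> nat set" where "Dset n = {n+1..2*n}"
definition Vp :: "nat \<Rightarrow> nat set" where "Vp n = {1..2*n}"
definition Vall :: "nat \<Rightarrow> nat set" where "Vall n = {0..2*n+1}"

text \<open>Side classes P^1..P^4 (side indicator a : nat => nat, values in {0,1}).\<close>
definition Pcls :: "nat \<Rightarrow> (nat \<Rightarrow> nat) \<Rightarrow> nat \<Rightarrow> nat \<Rightarrow> nat set" where
  "Pcls n a ap ad = {i \<in> Pset n. a i = ap \<and> a (i+n) = ad}"

abbreviation P1 where "P1 n a \<equiv> Pcls n a 0 0"
abbreviation P2 where "P2 n a \<equiv> Pcls n a 1 1"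
abbreviation P3 where "P3 n a \<equiv> Pcls n a 0 1"
abbreviation P4 where "P4 n a \<equiv> Pcls n a 1 0"

text \<open>The queues are given as a list of lists of pickup tasks (front of the list = front of the queue).\<close>
definition queues_ok :: "nat \<Rightarrow> nat list list \<Rightarrow> bool" where
  "queues_ok n qs \<longleftrightarrow> distinct (concat qs) \<and> set (concat qs) = Pset n \<and> [] \<notin> set qs"

definition qbefore :: "nat list list \<Rightarrow> nat \<Rightarrow> nat \<Rightarrow> bool" where
  "qbefore qs k j \<longleftrightarrow> (\<exists>q\<in>set qs. \<exists>u v. u < v \<and> v < length q \<and> q!u = k \<and> q!v = j)"

definition qnext :: "nat list list \<Rightarrow> nat \<Rightarrow> nat \<Rightarrow> bool" where
  "qnext qs i j \<longleftrightarrow> (\<exists>q\<in>set qs. \<exists>u. Suc u < length q \<and> q!u = i \<and> q!(Suc u) = j)"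

definition excl_pickup :: "nat \<Rightarrow> (nat \<Rightarrow> nat) \<Rightarrow> nat list list \<Rightarrow> nat \<Rightarrow> nat set" where
  "excl_pickup n a qs i =
     {j \<in> Pset n. qbefore qs j i}
   \<union> {j \<in> Pset n. \<exists>k. qnext qs i k \<and> qbefore qs k j}
   \<union> (if i \<in> P1 n a \<union> P4 n a then P3 n a else {})
   \<union> (if i \<in> P2 n a \<union> P3 n a then P4 n a else {})
   \<union> {j \<in> Dset n. qbefore qs i (j-n)}
   \<union> (if i \<in> P1 n a \<union> P3 n a then {j \<in> Dset n. j-n \<in> (P1 n a \<union> P4 n a) - {i}} else {})
   \<union> (if i \<in> P2 n a \<union> P4 n a then {j \<in> Dset n. j-n \<in> (P2 n a \<union> P3 n a) - {i}} else {})"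

definition SP8 :: "nat \<Rightarrow> (nat \<Rightarrow> nat) \<Rightarrow> nat list list \<Rightarrow> nat \<Rightarrow> nat \<Rightarrow> nat set" where
  "SP8 n a qs Q i = (if i-n \<in> P3 n a then
      {j \<in> Pset n. card {k \<in> P3 n a. qbefore qs (i-n) k \<and> qbefore qs k j} \<ge> Q} else {})"

definition SP9 :: "nat \<Rightarrow> (nat \<Rightarrow> nat) \<Rightarrow> nat list list \<Rightarrow> nat \<Rightarrow> nat \<Rightarrow> nat set" where
  "SP9 n a qs Q i = (if i-n \<in> P4 n a then
      {j \<in> Pset n. card {k \<in> P4 n a. qbefore qs (i-n) k \<and> qbefore qs k j} \<ge> Q} else {})"

definition excl_delivery :: "nat \<Rightarrow> (nat \<Rightarrow> nat) \<Rightarrow> nat list list \<Rightarrow> nat \<Rightarrow> nat \<Rightarrow> nat set" where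
  "excl_delivery n a qs Q i =
     {j \<in> Pset n. qbefore qs j (i-n)}
   \<union> (if i-n \<in> P1 n a then {j \<in> Pset n. \<exists>k \<in> P3 n a. qbefore qs (i-n) k \<and> qbefore qs k j} else {})
   \<union> (if i-n \<in> P2 n a then {j \<in> Pset n. \<exists>k \<in> P4 n a. qbefore qs (i-n) k \<and> qbefore qs k j} else {})
   \<union> SP8 n a qs Q i \<union> SP9 n a qs Q i
   \<union> (if i-n \<in> P1 n a \<union> P2 n a then {j \<in> Dset n. qbefore qs (i-n) (j-n)} else {})
   \<union> (if i-n \<in> P3 n a \<union> P4 n a then {j \<in> Dset n. qbefore qs (j-n) (i-n)} else {})
   \<union> {j \<in> Dset n. j-n \<in> SP8 n a qs Q i \<union> SP9 n a qs Q i}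
   \<union> (if i-n \<in> P3 n a then {j \<in> Dset n. j-n \<in> P2 n a \<union> P4 n a} else {})
   \<union> (if i-n \<in> P4 n a then {j \<in> Dset n. j-n \<in> P1 n a \<union> P3 n a} else {})"

definition arcs :: "nat \<Rightarrow> (nat \<Rightarrow> nat) \<Rightarrow> nat list list \<Rightarrow> nat \<Rightarrow> (nat \<times> nat) set" where
  "arcs n a qs Q =
    ({(0, j) | j. j \<in> Pset n \<and> \<not> (\<exists>k. qbefore qs k j)}
   \<union> {(i, 2*n+1) | i. i \<in> Dset n \<and> \<not> (\<exists>k. qbefore qs (i-n) k)}
   \<union> {(i, j) | i j. i \<in> Pset n \<and> j \<in> Vp n - excl_pickup n a qs i}
   \<union> {(i, j) | i j. i \<in> Dset n \<and> j \<in> Vp n - excl_delivery n a qs Q i})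
   - {(i, j) | i j. i \<in> Vp n \<and> j \<in> Vp n \<and> (i = j \<or> i = j + n)}"

definition arcs' :: "nat \<Rightarrow> (nat \<Rightarrow> nat) \<Rightarrow> nat list list \<Rightarrow> nat \<Rightarrow> (nat \<times> nat) set" where
  "arcs' n a qs Q = {(i, j). (i, j) \<in> arcs n a qs Q \<and> i \<in> Vp n \<and> j \<in> Vp n}"

definition pdp_instance ::
  "nat \<Rightarrow> (nat \<Rightarrow> nat) \<Rightarrow> nat list list \<Rightarrow> nat \<Rightarrow> (nat \<Rightarrow> real) \<Rightarrow> (nat \<Rightarrow> real)
   \<Rightarrow> (nat \<Rightarrow> real) \<Rightarrow> (nat \<Rightarrow> real) \<Rightarrow> (nat \<Rightarrow> nat \<Rightarrow> real) \<Rightarrow> bool" where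
  "pdp_instance n a qs Q q s e l t \<longleftrightarrow>
     n \<ge> 1 \<and> (\<forall>i \<in> Vp n. a i \<in> {0, 1}) \<and> queues_ok n qs \<and> Q \<ge> 1
   \<and> (\<forall>i \<in> Pset n. q i > 0 \<and> q (i+n) = - q i)
   \<and> (\<forall>i \<in> Vall n - {2*n+1}. s i \<ge> 0) \<and> s 0 = 0
   \<and> (\<forall>i j. t i j \<ge> 0)"

definition Yin :: "nat \<Rightarrow> (nat \<Rightarrow> nat) \<Rightarrow> nat list list \<Rightarrow> nat
     \<Rightarrow> (nat \<Rightarrow> nat \<Rightarrow> nat \<Rightarrow> nat) \<Rightarrow> nat \<Rightarrow> nat \<Rightarrow> nat" where
  "Yin n a qs Q y k v = (\<Sum>u \<in> {u. (u, v) \<in> arcs' n a qs Q}. y k u v)"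

definition pdp_feasible ::
  "nat \<Rightarrow> (nat \<Rightarrow> nat) \<Rightarrow> nat list list \<Rightarrow> nat \<Rightarrow> (nat \<Rightarrow> real) \<Rightarrow> (nat \<Rightarrow> real)
   \<Rightarrow> (nat \<Rightarrow> real) \<Rightarrow> (nat \<Rightarrow> real) \<Rightarrow> (nat \<Rightarrow> nat \<Rightarrow> real)
   \<Rightarrow> (nat \<Rightarrow> nat \<Rightarrow> nat) \<Rightarrow> (nat \<Rightarrow> nat \<Rightarrow> nat \<Rightarrow> nat) \<Rightarrow> (nat \<Rightarrow> real) \<Rightarrow> (nat \<Rightarrow> real) \<Rightarrow> bool" where
  "pdp_feasible n a qs Q q s e l t x y b w \<longleftrightarrow>
     (let A = arcs n a qs Q; A' = arcs' n a qs Q; P = Pset n; V' = Vp n; V = Vall n in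
       \<comment> \<open>variable domains\<close>
       (\<forall>(i, j) \<in> A. x i j \<in> {0, 1})
     \<and> (\<forall>k \<in> P. \<forall>(i, j) \<in> A'. y k i j \<in> {0, 1})
     \<and> (\<forall>i \<in> V. b i \<ge> 0 \<and> w i \<ge> 0) \<and> b 0 = 0 \<and> w 0 = 0
       \<comment> \<open>(i) degree constraints\<close>
     \<and> (\<forall>i \<in> V - {2*n+1}. (\<Sum>j \<in> {j. (i, j) \<in> A}. x i j) = 1)
     \<and> (\<forall>i \<in> V - {0}. (\<Sum>j \<in> {j. (j, i) \<in> A}. x j i) = 1)
       \<comment> \<open>(ii) pairing\<close>
     \<and> (\<forall>i \<in> P. b (i+n) \<ge> b i + s i + t i (i+n))
       \<comment> \<open>(iii) FIFO\<close>
     \<and> (\<forall>i j. qnext qs i j \<longrightarrow> b j \<ge> b i + s i)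
       \<comment> \<open>(iv) time and load propagation\<close>
     \<and> (\<forall>(i, j) \<in> A. j \<in> V' \<union> {2*n+1} \<and> x i j = 1 \<longrightarrow> b j \<ge> b i + s i + t i j)
     \<and> (\<forall>(i, j) \<in> A. j \<in> V' \<and> x i j = 1 \<longrightarrow> w j \<ge> w i + q j)
       \<comment> \<open>(v) time windows\<close>
     \<and> (\<forall>i \<in> P. e i \<le> b (i+n) + s (i+n) \<and> b (i+n) + s (i+n) \<le> l i)
       \<comment> \<open>(vi) capacity\<close>
     \<and> (\<forall>i \<in> V'. max 0 (q i) \<le> w i \<and> w i \<le> min (real Q) (real Q + q i))
       \<comment> \<open>(vii) flow conservation of y^k\<close>
     \<and> (\<forall>i \<in> V'. \<forall>k \<in> P.
          (\<Sum>j \<in> {j. (i, j) \<in> A'}. int (y k i j)) - (\<Sum>j \<in> {j. (j, i) \<in> A'}. int (y k j i))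
          = (if i = k then 1 else if i = k + n then -1 else 0))
       \<comment> \<open>(viii) side constraints\<close>
     \<and> (\<forall>k \<in> P1 n a. \<forall>j \<in> P1 n a - {k}. Yin n a qs Q y k j = Yin n a qs Q y k (j+n))
     \<and> (\<forall>k \<in> P2 n a. \<forall>j \<in> P2 n a - {k}. Yin n a qs Q y k j = Yin n a qs Q y k (j+n))
     \<and> (\<forall>k \<in> P3 n a. \<forall>j \<in> P3 n a - {k}. Yin n a qs Q y k j + Yin n a qs Q y k (j+n) \<le> 1)
     \<and> (\<forall>k \<in> P4 n a. \<forall>j \<in> P4 n a - {k}. Yin n a qs Q y k j + Yin n a qs Q y k (j+n) \<le> 1)
     \<and> (\<forall>k \<in> P. \<forall>(u, j) \<in> A'.
          (j \<in> P3 n a \<and> k \<in> P1 n a) \<or> (j \<in> P4 n a \<and> k \<in> P2 n a)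
          \<or> (j \<in> P4 n a \<and> k \<in> P3 n a) \<or> (j \<in> P3 n a \<and> k \<in> P4 n a) \<longrightarrow> y k u j = 0)
     \<and> (\<forall>k \<in> P. \<forall>j \<in> P. \<forall>u. (u, j+n) \<in> A' \<and>
          ((j \<in> P4 n a \<and> k \<in> P1 n a) \<or> (j \<in> P3 n a \<and> k \<in> P2 n a)) \<longrightarrow> y k u (j+n) = 0)
       \<comment> \<open>(ix) linking\<close>
     \<and> (\<forall>k \<in> P. \<forall>(i, j) \<in> A'. y k i j \<le> x i j))"

definition xval :: "nat \<Rightarrow> (nat \<Rightarrow> nat) \<Rightarrow> nat list list \<Rightarrow> nat \<Rightarrow> (nat \<Rightarrow> nat \<Rightarrow> nat) \<Rightarrow> nat \<Rightarrow> nat \<Rightarrow> nat" where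
  "xval n a qs Q x u v = (if (u, v) \<in> arcs n a qs Q then x u v else 0)"

end

theory Submission
  imports Defs
begin

text \<open>The arc \<open>(i+n, j+n)\<close> is excluded from \<open>A\<close> by \<open>S_D,7\<close> resp. \<open>S_D,8\<close>, and the three
  remaining variables are pairwise exclusive: \<open>x_ij\<close> and \<open>x_i,i+n\<close> leave the same node;
  \<open>x_ij\<close> and \<open>x_ji\<close> would form a 2-cycle along which the load strictly increases; and if
  \<open>x_ji = x_i,i+n = 1\<close>, these are the only arcs leaving \<open>j\<close> and \<open>i\<close>, so commodity \<open>j\<close> is
  forced along \<open>j \<rightarrow> i \<rightarrow> i+n\<close>, which the side constraints (viii) forbid because \<open>i+n\<close> is a
  delivery on the other side.\<close>

lemma sum_eq_1_other_zero:
  fixes f :: "'a \<Rightarrow> nat"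
  assumes "finite S" "sum f S = 1" "u \<in> S" "v \<in> S" "u \<noteq> v" "f u = 1"
  shows "f v = 0"
proof -
  have "sum f {u, v} \<le> sum f S" using assms by (intro sum_mono2) auto
  thus ?thesis using assms by simp
qed

lemma finite_arcs_out: "finite {v. (u, v) \<in> arcs n a qs Q}"
  by (rule finite_subset[of _ "{0..2*n+1}"]) (auto simp: arcs_def Pset_def Vp_def)

lemma finite_arcs'_out: "finite {v. (u, v) \<in> arcs' n a qs Q}"
  by (rule finite_subset[of _ "Vp n"]) (auto simp: arcs'_def Vp_def)

lemma finite_arcs'_in: "finite {v. (v, u) \<in> arcs' n a qs Q}"
  by (rule finite_subset[of _ "Vp n"]) (auto simp: arcs'_def Vp_def)

lemma arcs'_iff: "(u, v) \<in> arcs' n a qs Q \<longleftrightarrow> (u, v) \<in> arcs n a qs Q \<and> u \<in> Vp n \<and> v \<in> Vp n"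
  by (simp add: arcs'_def)

lemma delivery_cross_side_not_arc:
  assumes "(i \<in> P4 n a \<and> j \<in> P1 n a) \<or> (i \<in> P3 n a \<and> j \<in> P2 n a)"
  shows "(i + n, j + n) \<notin> arcs n a qs Q"
  using assms by (auto simp: arcs_def excl_delivery_def Dset_def Pcls_def Pset_def)

context
  fixes n Q :: nat and a :: "nat \<Rightarrow> nat" and qs :: "nat list list"
    and q s e l b w :: "nat \<Rightarrow> real" and t :: "nat \<Rightarrow> nat \<Rightarrow> real"
    and x :: "nat \<Rightarrow> nat \<Rightarrow> nat" and y :: "nat \<Rightarrow> nat \<Rightarrow> nat \<Rightarrow> nat"
  assumes feas: "pdp_feasible n a qs Q q s e l t x y b w"
begin

lemma feasible_x_binary:
  assumes "(u, v) \<in> arcs n a qs Q"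
  shows "x u v \<in> {0, 1}"
proof -
  have "\<forall>(u, v) \<in> arcs n a qs Q. x u v \<in> {0, 1}"
    using feas unfolding pdp_feasible_def Let_def by (elim conjE) assumption
  then show ?thesis using assms by blast
qed

lemma feasible_out_degree:
  assumes "u \<in> Vall n - {2*n+1}"
  shows "(\<Sum>v \<in> {v. (u, v) \<in> arcs n a qs Q}. x u v) = 1"
proof -
  have "\<forall>u \<in> Vall n - {2*n+1}. (\<Sum>v \<in> {v. (u, v) \<in> arcs n a qs Q}. x u v) = 1"
    using feas unfolding pdp_feasible_def Let_def by (elim conjE) assumption
  then show ?thesis using assms by blast
qed

lemma feasible_load:
  assumes "(u, v) \<in> arcs n a qs Q" "v \<in> Vp n" "x u v = 1"
  shows "w u + q v \<le> w v"
proof -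
  have "\<forall>(u, v) \<in> arcs n a qs Q. v \<in> Vp n \<and> x u v = 1 \<longrightarrow> w v \<ge> w u + q v"
    using feas unfolding pdp_feasible_def Let_def by (elim conjE) assumption
  then show ?thesis using assms by blast
qed

lemma feasible_flow:
  assumes "u \<in> Vp n" "k \<in> Pset n"
  shows "(\<Sum>v \<in> {v. (u, v) \<in> arcs' n a qs Q}. int (y k u v))
           - (\<Sum>v \<in> {v. (v, u) \<in> arcs' n a qs Q}. int (y k v u))
         = (if u = k then 1 else if u = k + n then -1 else 0)"
proof -
  have "\<forall>u \<in> Vp n. \<forall>k \<in> Pset n.
          (\<Sum>v \<in> {v. (u, v) \<in> arcs' n a qs Q}. int (y k u v))
            - (\<Sum>v \<in> {v. (v, u) \<in> arcs' n a qs Q}. int (y k v u))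
          = (if u = k then 1 else if u = k + n then -1 else 0)"
    using feas unfolding pdp_feasible_def Let_def by (elim conjE) assumption
  then show ?thesis using assms by blast
qed

lemma feasible_link:
  assumes "k \<in> Pset n" "(u, v) \<in> arcs' n a qs Q"
  shows "y k u v \<le> x u v"
proof -
  have "\<forall>k \<in> Pset n. \<forall>(u, v) \<in> arcs' n a qs Q. y k u v \<le> x u v"
    using feas unfolding pdp_feasible_def Let_def by (elim conjE) assumption
  then show ?thesis using assms by blast
qed

lemma feasible_no_cross_side_delivery:
  assumes "k \<in> Pset n" "i \<in> Pset n" "(u, i + n) \<in> arcs' n a qs Q"
    and "(i \<in> P4 n a \<and> k \<in> P1 n a) \<or> (i \<in> P3 n a \<and> k \<in> P2 n a)"
  shows "y k u (i + n) = 0"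
proof -
  have "\<forall>k \<in> Pset n. \<forall>i \<in> Pset n. \<forall>u. (u, i+n) \<in> arcs' n a qs Q \<and>
          ((i \<in> P4 n a \<and> k \<in> P1 n a) \<or> (i \<in> P3 n a \<and> k \<in> P2 n a)) \<longrightarrow> y k u (i+n) = 0"
    using feas unfolding pdp_feasible_def Let_def by (elim conjE) assumption
  then show ?thesis using assms by blast
qed

lemma xval_le_1: "xval n a qs Q x u v \<le> 1"
  using feasible_x_binary[of u v] by (auto simp: xval_def)

lemma xval_out_exclusive:
  assumes "u \<in> Vall n - {2*n+1}" "v \<noteq> v'"
  shows "xval n a qs Q x u v + xval n a qs Q x u v' \<le> 1"
proof (cases "(u, v) \<in> arcs n a qs Q \<and> (u, v') \<in> arcs n a qs Q \<and> x u v = 1")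
  case True
  then have "x u v' = 0"
    using sum_eq_1_other_zero[OF finite_arcs_out feasible_out_degree[OF assms(1)]] assms(2)
    by auto
  then show ?thesis using True by (simp add: xval_def)
next
  case False
  then show ?thesis
    using xval_le_1[of u v'] feasible_x_binary[of u v] by (auto simp: xval_def)
qed

lemma xval_no_2cycle:
  assumes "u \<in> Vp n" "v \<in> Vp n" "q u + q v > 0"
  shows "xval n a qs Q x u v + xval n a qs Q x v u \<le> 1"
proof (rule ccontr)
  assume "\<not> ?thesis"
  then have "(u, v) \<in> arcs n a qs Q" "(v, u) \<in> arcs n a qs Q" "x u v = 1" "x v u = 1"
    using xval_le_1[of u v] xval_le_1[of v u] by (auto simp: xval_def split: if_splits)
  then have "w u + q v \<le> w v" "w v + q u \<le> w u"
    using feasible_load assms by auto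
  then show False using assms(3) by linarith
qed

text \<open>If \<open>(u, v)\<close> is the arc used to leave \<open>u\<close>, every commodity passing through or starting at \<open>u\<close>
  must continue along it.\<close>
lemma flow_follows_used_arc:
  assumes k: "k \<in> Pset n" and uv: "(u, v) \<in> arcs' n a qs Q" "x u v = 1" and "u \<noteq> k + n"
  shows "of_bool (u = k) + (\<Sum>v' \<in> {v'. (v', u) \<in> arcs' n a qs Q}. int (y k v' u)) \<le> int (y k u v)"
proof -
  have u: "u \<in> Vp n" "u \<in> Vall n - {2*n+1}" "v \<in> Vp n"
    using uv by (auto simp: arcs'_iff Vp_def Vall_def)
  have other_zero: "int (y k u v') = 0" if "v' \<in> {v'. (u, v') \<in> arcs' n a qs Q} - {v}" for v'
  proof -
    have "x u v' = 0"
      using that uv sum_eq_1_other_zero[OF finite_arcs_out feasible_out_degree[OF u(2)], of v v']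
      by (auto simp: arcs'_iff)
    then show ?thesis using feasible_link[OF k] that by fastforce
  qed
  have "(\<Sum>v' \<in> {v'. (u, v') \<in> arcs' n a qs Q}. int (y k u v')) = int (y k u v)"
    using uv(1) other_zero by (subst sum.remove[OF finite_arcs'_out, of v]) auto
  then show ?thesis using feasible_flow[OF u(1) k] assms(4) by (auto split: if_splits)
qed

lemma no_forced_path_to_cross_side_delivery:
  assumes ij: "(i \<in> P4 n a \<and> j \<in> P1 n a) \<or> (i \<in> P3 n a \<and> j \<in> P2 n a)"
  shows "xval n a qs Q x j i + xval n a qs Q x i (i+n) \<le> 1"
proof (rule ccontr)
  assume "\<not> ?thesis"
  then have arcs: "(j, i) \<in> arcs n a qs Q" "(i, i+n) \<in> arcs n a qs Q" "x j i = 1" "x i (i+n) = 1"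
    using xval_le_1[of j i] xval_le_1[of i "i+n"] by (auto simp: xval_def split: if_splits)
  have P: "i \<in> Pset n" "j \<in> Pset n" "i \<noteq> j" using ij by (auto simp: Pcls_def)
  then have arcs': "(j, i) \<in> arcs' n a qs Q" "(i, i+n) \<in> arcs' n a qs Q"
    using arcs by (auto simp: arcs'_iff Pset_def Vp_def)
  have "1 + (\<Sum>v \<in> {v. (v, j) \<in> arcs' n a qs Q}. int (y j v j)) \<le> int (y j j i)"
    using flow_follows_used_arc[OF P(2) arcs'(1) arcs(3)] P by (simp add: Pset_def)
  then have "1 \<le> int (y j j i)"
    by (smt (verit) sum_nonneg of_nat_0_le_iff)
  also have "int (y j j i) \<le> (\<Sum>v \<in> {v. (v, i) \<in> arcs' n a qs Q}. int (y j v i))"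
    using arcs'(1) by (intro member_le_sum finite_arcs'_in) auto
  also have "\<dots> \<le> int (y j i (i+n))"
    using flow_follows_used_arc[OF P(2) arcs'(2) arcs(4)] P by (auto simp: Pset_def)
  finally show False
    using feasible_no_cross_side_delivery[OF P(2,1) arcs'(2)] ij by simp
qed

end

theorem proposition2:
  fixes n Q :: nat and a :: "nat \<Rightarrow> nat" and qs :: "nat list list"
    and q s e l b w :: "nat \<Rightarrow> real" and t :: "nat \<Rightarrow> nat \<Rightarrow> real"
    and x :: "nat \<Rightarrow> nat \<Rightarrow> nat" and y :: "nat \<Rightarrow> nat \<Rightarrow> nat \<Rightarrow> nat" and i j :: nat
  assumes "pdp_instance n a qs Q q s e l t"
    and "pdp_feasible n a qs Q q s e l t x y b w"
    and "(i \<in> P4 n a \<and> j \<in> P1 n a) \<or> (i \<in> P3 n a \<and> j \<in> P2 n a)"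
  shows "xval n a qs Q x i j + xval n a qs Q x j i + xval n a qs Q x i (i+n)
           + xval n a qs Q x (i+n) (j+n) \<le> 1"
proof -
  let ?X = "xval n a qs Q x"
  have P: "i \<in> Pset n" "j \<in> Pset n" using assms(3) by (auto simp: Pcls_def)
  have "q i > 0" "q j > 0" using assms(1) P unfolding pdp_instance_def by auto
  have "?X (i+n) (j+n) = 0"
    using delivery_cross_side_not_arc[OF assms(3)] by (simp add: xval_def)
  moreover have "?X i j + ?X i (i+n) \<le> 1"
    using xval_out_exclusive[OF assms(2), of i j "i+n"] P by (auto simp: Pset_def Vall_def)
  moreover have "?X i j + ?X j i \<le> 1"
    using xval_no_2cycle[OF assms(2), of i j] P \<open>q i > 0\<close> \<open>q j > 0\<close> by (auto simp: Pset_def Vp_def)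
  moreover have "?X j i + ?X i (i+n) \<le> 1"
    using no_forced_path_to_cross_side_delivery[OF assms(2,3)] .
  ultimately show ?thesis
    using xval_le_1[OF assms(2), of i j] xval_le_1[OF assms(2), of j i]
      xval_le_1[OF assms(2), of i "i+n"] by presburger
qed

end
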